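(* For every integer $k\geq 2$ and every tree $T$, $\nu_{k}(T) \geq \frac{\nu_{k-1}(T) + \nu_{k+1}(T)}{2}$.
   Context: For $k\geq 1$, $\nu_k(T)$ is the maximum number of edges of a $k$-edge-colorable subgraph of $T$ (a subgraph whose edges can be colored with $k$ colors so that adjacent edges get distinct colors). *)

theory Defs
  imports Complex_Main
begin

definition simple_graph :: "'a set \<Rightarrow> 'a set set \<Rightarrow> bool" where
  "simple_graph V E \<longleftrightarrow> finite V \<and> (\<forall>e\<in>E. e \<subseteq> V \<and> card e = 2)"

definition adj :: "'a set set \<Rightarrow> 'a \<Rightarrow> 'a \<Rightarrow> bool" where
  "adj E u v \<longleftrightarrow> {u, v} \<in> E"

definition connected_graph :: "'a set \<Rightarrow> 'a set set \<Rightarrow> bool" where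
  "connected_graph V E \<longleftrightarrow> (\<forall>u\<in>V. \<forall>v\<in>V. (adj E)\<^sup>*\<^sup>* u v)"

definition is_cycle :: "'a set set \<Rightarrow> 'a list \<Rightarrow> bool" where
  "is_cycle E vs \<longleftrightarrow> length vs \<ge> 3 \<and> distinct vs
     \<and> (\<forall>i. Suc i < length vs \<longrightarrow> adj E (vs ! i) (vs ! Suc i))
     \<and> adj E (last vs) (hd vs)"

definition acyclic_graph :: "'a set set \<Rightarrow> bool" where
  "acyclic_graph E \<longleftrightarrow> (\<nexists>vs. is_cycle E vs)"

definition is_tree :: "'a set \<Rightarrow> 'a set set \<Rightarrow> bool" where
  "is_tree V E \<longleftrightarrow> simple_graph V E \<and> V \<noteq> {} \<and> connected_graph V E \<and> acyclic_graph E"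

definition k_edge_colorable :: "nat \<Rightarrow> 'a set set \<Rightarrow> bool" where
  "k_edge_colorable k F \<longleftrightarrow> (\<exists>c :: 'a set \<Rightarrow> nat.
      (\<forall>e\<in>F. c e < k) \<and>
      (\<forall>e\<in>F. \<forall>e'\<in>F. e \<noteq> e' \<and> e \<inter> e' \<noteq> {} \<longrightarrow> c e \<noteq> c e'))"

definition nu :: "nat \<Rightarrow> 'a set set \<Rightarrow> nat" where
  "nu k E = Max {card F | F. F \<subseteq> E \<and> k_edge_colorable k F}"

end

theory Submission
  imports Defs
begin

text \<open>Take optimal subgraphs \<open>A\<close> and \<open>B\<close> for \<open>\<nu>\<^sub>k\<^sub>-\<^sub>1\<close> and \<open>\<nu>\<^sub>k\<^sub>+\<^sub>1\<close>. Their symmetric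
  difference is a forest, whose edges can be split into two classes whose degrees differ by at
  most one at every vertex. Adding either class to \<open>A \<inter> B\<close> gives a forest of maximum degree
  at most \<open>k\<close>, and a forest of maximum degree \<open>k\<close> is \<open>k\<close>-edge-colourable (colour it by
  repeatedly removing a pendant edge). The two resulting subgraphs together have
  \<open>|A| + |B|\<close> edges.\<close>

definition forest :: "'a set set \<Rightarrow> bool" where
  "forest F \<longleftrightarrow> finite F \<and> (\<forall>e\<in>F. card e = 2) \<and> acyclic_graph F"

definition deg :: "'a set set \<Rightarrow> 'a \<Rightarrow> nat" where
  "deg F x = card {e\<in>F. x \<in> e}"

definition is_path :: "'a set set \<Rightarrow> 'a list \<Rightarrow> bool" where
  "is_path F vs \<longleftrightarrow> distinct vs \<and> (\<forall>i. Suc i < length vs \<longrightarrow> adj F (vs ! i) (vs ! Suc i))"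

lemma forest_subset: "forest F \<Longrightarrow> G \<subseteq> F \<Longrightarrow> forest G"
  unfolding forest_def acyclic_graph_def is_cycle_def adj_def by (meson finite_subset subsetD)

lemma is_tree_imp_forest: "is_tree V E \<Longrightarrow> forest E"
  unfolding is_tree_def simple_graph_def forest_def
  by (metis Pow_iff finite_Pow_iff finite_subset subsetI)

lemma is_path_set_subset:
  assumes "is_path F vs" "2 \<le> length vs"
  shows "set vs \<subseteq> \<Union>F"
proof
  fix x assume "x \<in> set vs"
  then obtain i where i: "i < length vs" "vs ! i = x" by (metis in_set_conv_nth)
  show "x \<in> \<Union>F"
  proof (cases "Suc i < length vs")
    case True
    then show ?thesis using assms(1) i unfolding is_path_def adj_def by blast
  next
    case False
    then have "adj F (vs ! (i - 1)) (vs ! i)"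
      using assms i unfolding is_path_def by (metis Suc_diff_1 Suc_lessI gr0I less_2_cases_iff not_less)
    then show ?thesis using i unfolding adj_def by blast
  qed
qed

lemma longest_path_exists:
  assumes "forest F" "F \<noteq> {}"
  obtains vs where "is_path F vs" "2 \<le> length vs"
    "\<And>ws. is_path F ws \<Longrightarrow> length ws \<le> length vs"
proof -
  define P where "P = {vs. is_path F vs \<and> 2 \<le> length vs}"
  have "finite (\<Union>F)"
    using assms(1) unfolding forest_def by (metis card.infinite finite_Union zero_neq_numeral)
  moreover have "P \<subseteq> {xs. set xs \<subseteq> \<Union>F \<and> length xs \<le> card (\<Union>F)}"
    using is_path_set_subset calculation
    unfolding P_def is_path_def by (auto simp: card_mono distinct_card[symmetric])
  ultimately have finP: "finite P" using finite_lists_length_le finite_subset by blast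
  obtain a b where "{a, b} \<in> F" "a \<noteq> b"
    using assms unfolding forest_def by (metis all_not_in_conv card_2_iff)
  then have "[a, b] \<in> P" unfolding P_def is_path_def adj_def by (auto simp: less_Suc_eq)
  then obtain vs where vs: "vs \<in> P" "length vs = Max (length ` P)"
    using finP Max_in[of "length ` P"] by (metis empty_iff finite_imageI image_iff)
  show ?thesis
  proof (rule that)
    show "is_path F vs" "2 \<le> length vs" using vs(1) unfolding P_def by auto
    show "length ws \<le> length vs" if "is_path F ws" for ws
    proof (cases "2 \<le> length ws")
      case True
      then show ?thesis using that finP vs(2) unfolding P_def by simp
    qed (use \<open>2 \<le> length vs\<close> in simp)
  qed
qed

text \<open>The first vertex of a longest path is a leaf: another edge at it would either extend the
  path or close a cycle.\<close>
lemma forest_has_pendant_edge: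
  assumes forest: "forest F" and "F \<noteq> {}"
  obtains u v where "u \<noteq> v" "{u, v} \<in> F" "\<And>e. e \<in> F \<Longrightarrow> v \<in> e \<Longrightarrow> e = {u, v}"
proof -
  obtain vs where path: "is_path F vs" and len: "2 \<le> length vs"
    and longest: "\<And>ws. is_path F ws \<Longrightarrow> length ws \<le> length vs"
    using longest_path_exists assms by blast
  have dist: "distinct vs" and adjv: "\<And>i. Suc i < length vs \<Longrightarrow> adj F (vs ! i) (vs ! Suc i)"
    using path unfolding is_path_def by auto
  define v where "v = vs ! 0"
  define u where "u = vs ! 1"
  have "{u, v} \<in> F" using adjv[of 0] len unfolding u_def v_def adj_def by (auto simp: insert_commute)
  moreover have "u \<noteq> v" using dist len unfolding u_def v_def by (subst nth_eq_iff_index_eq) auto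
  moreover have "e = {u, v}" if eF: "e \<in> F" and "v \<in> e" for e
  proof -
    obtain w where ew: "e = {v, w}" "w \<noteq> v"
      using forest eF \<open>v \<in> e\<close> unfolding forest_def by (metis card_2_iff insert_commute insertE singletonD)
    have "w \<in> set vs"
    proof (rule ccontr)
      assume "w \<notin> set vs"
      moreover have "adj F ((w # vs) ! i) ((w # vs) ! Suc i)" if "Suc i < length (w # vs)" for i
        using adjv[of "i - 1"] that eF ew unfolding adj_def v_def
        by (cases i) (auto simp: insert_commute)
      ultimately have "is_path F (w # vs)" using dist unfolding is_path_def by simp
      then show False using longest by fastforce
    qed
    then obtain i where i: "i < length vs" "vs ! i = w" by (metis in_set_conv_nth)
    have "i \<noteq> 0" using i ew unfolding v_def by metis
    have "i = 1"
    proof (rule ccontr)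
      assume "i \<noteq> 1"
      have "last (take (Suc i) vs) = w" using i by (simp add: take_Suc_conv_app_nth)
      moreover have "hd (take (Suc i) vs) = v" using i unfolding v_def by (cases vs) auto
      moreover have "adj F w v" using eF ew unfolding adj_def by (simp add: insert_commute)
      ultimately have "is_cycle F (take (Suc i) vs)"
        using \<open>i \<noteq> 0\<close> \<open>i \<noteq> 1\<close> i dist adjv unfolding is_cycle_def by simp
      then show False using forest unfolding forest_def acyclic_graph_def by blast
    qed
    then show ?thesis using ew i unfolding u_def by (simp add: insert_commute)
  qed
  ultimately show ?thesis using that by blast
qed

lemma forest_induct [consumes 1, case_names empty pendant]:
  assumes "forest F"
    and empty: "P {}"
    and pendant: "\<And>F u v. forest F \<Longrightarrow> u \<noteq> v \<Longrightarrow> v \<notin> \<Union>F \<Longrightarrow> P F \<Longrightarrow> P (insert {u, v} F)"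
  shows "P F"
proof -
  have "finite F" using assms(1) unfolding forest_def by blast
  then show ?thesis using assms(1)
  proof (induction F rule: finite_psubset_induct)
    case (psubset F)
    then show ?case
    proof (cases "F = {}")
      case False
      then obtain u v where uv: "u \<noteq> v" "{u, v} \<in> F" and leaf: "\<And>e. e \<in> F \<Longrightarrow> v \<in> e \<Longrightarrow> e = {u, v}"
        using forest_has_pendant_edge psubset.prems by blast
      define F' where "F' = F - {{u, v}}"
      have "forest F'" using forest_subset psubset.prems unfolding F'_def by blast
      moreover have "v \<notin> \<Union>F'" using leaf unfolding F'_def by blast
      moreover have "P F'" using psubset.IH \<open>forest F'\<close> uv(2) unfolding F'_def by blast
      ultimately have "P (insert {u, v} F')" using pendant uv(1) by blast
      then show ?thesis using uv(2) unfolding F'_def by (simp add: insert_absorb)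
    qed (use empty in simp)
  qed
qed

lemma deg_Un_disjoint:
  "finite X \<Longrightarrow> finite Y \<Longrightarrow> X \<inter> Y = {} \<Longrightarrow> deg (X \<union> Y) x = deg X x + deg Y x"
  unfolding deg_def by (subst card_Un_disjoint[symmetric]) (auto intro: arg_cong[where f = card])

lemma deg_insert:
  assumes "finite F" "e \<notin> F"
  shows "deg (insert e F) x = deg F x + (if x \<in> e then 1 else 0)"
proof -
  have "{f \<in> insert e F. x \<in> f} = (if x \<in> e then insert e {f \<in> F. x \<in> f} else {f \<in> F. x \<in> f})"
    by auto
  then show ?thesis using assms by (simp add: deg_def)
qed

lemma deg_le_if_colorable:
  assumes "k_edge_colorable k F"
  shows "deg F x \<le> k"
proof -
  obtain c where "\<forall>e\<in>F. c e < k" "\<forall>e\<in>F. \<forall>e'\<in>F. e \<noteq> e' \<and> e \<inter> e' \<noteq> {} \<longrightarrow> c e \<noteq> c e'"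
    using assms unfolding k_edge_colorable_def by blast
  then have "inj_on c {e\<in>F. x \<in> e}" "c ` {e\<in>F. x \<in> e} \<subseteq> {..<k}"
    by (auto simp: inj_on_def)
  then have "card {e\<in>F. x \<in> e} \<le> card {..<k}" by (intro card_inj_on_le) auto
  then show ?thesis unfolding deg_def by simp
qed

lemma colorable_insert_pendant:
  assumes col: "k_edge_colorable k F" and "finite F" "v \<notin> \<Union>F" and "deg F u < k"
  shows "k_edge_colorable k (insert {u, v} F)"
proof -
  obtain c where c_lt: "\<forall>e\<in>F. c e < k"
    and c_ok: "\<forall>e\<in>F. \<forall>e'\<in>F. e \<noteq> e' \<and> e \<inter> e' \<noteq> {} \<longrightarrow> c e \<noteq> c e'"
    using col unfolding k_edge_colorable_def by blast
  define U where "U = {e\<in>F. u \<in> e}"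
  have "card (c ` U) < card {..<k}"
    using assms(2,4) card_image_le[of U c] unfolding U_def deg_def by simp
  then have "\<not> {..<k} \<subseteq> c ` U"
    using card_mono[of "c ` U" "{..<k}"] \<open>finite F\<close> unfolding U_def by auto
  then obtain free where free: "free < k" "free \<notin> c ` U" by blast
  have "c e \<noteq> free" if "e \<in> F" "e \<inter> {u, v} \<noteq> {}" for e
    using that \<open>v \<notin> \<Union>F\<close> free(2) unfolding U_def by blast
  moreover have "{u, v} \<notin> F" using \<open>v \<notin> \<Union>F\<close> by blast
  ultimately show ?thesis
    unfolding k_edge_colorable_def using c_lt c_ok free(1)
    by (intro exI[of _ "c({u, v} := free)"]) (auto simp: Int_commute)
qed

lemma forest_colorable_if_deg_le:
  assumes "forest F" "\<And>x. deg F x \<le> k"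
  shows "k_edge_colorable k F"
  using assms
proof (induction F rule: forest_induct)
  case empty
  then show ?case unfolding k_edge_colorable_def by simp
next
  case (pendant F u v)
  have fin: "finite F" and new: "{u, v} \<notin> F"
    using pendant.hyps(1,3) unfolding forest_def by auto
  have "deg F x \<le> k" for x
    using pendant.prems[of x] deg_insert[OF fin new, of x] by simp
  then have "k_edge_colorable k F" by (rule pendant.IH)
  moreover have "deg F u < k"
    using pendant.prems[of u] deg_insert[OF fin new, of u] by simp
  ultimately show ?case by (rule colorable_insert_pendant[OF _ fin pendant.hyps(3)])
qed

lemma forest_balanced_split:
  assumes "forest F"
  obtains R where "R \<subseteq> F" "\<And>x. deg R x \<le> deg (F - R) x + 1" "\<And>x. deg (F - R) x \<le> deg R x + 1"
proof -
  have "\<exists>R\<subseteq>F. \<forall>x. deg R x \<le> deg (F - R) x + 1 \<and> deg (F - R) x \<le> deg R x + 1"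
    using assms
  proof (induction F rule: forest_induct)
    case empty
    then show ?case by (simp add: deg_def)
  next
    case (pendant F u v)
    then obtain R where R: "R \<subseteq> F"
      and bal: "\<And>x. deg R x \<le> deg (F - R) x + 1 \<and> deg (F - R) x \<le> deg R x + 1"
      by blast
    have fin: "finite R" "finite (F - R)"
      using R pendant.hyps(1) finite_subset unfolding forest_def by auto
    have new: "{u, v} \<notin> R" "{u, v} \<notin> F - R" using pendant.hyps(3) R by auto
    have v0: "deg R v = 0" "deg (F - R) v = 0"
      using pendant.hyps(3) R unfolding deg_def by (auto simp: card_eq_0_iff)
    text \<open>The pendant edge goes to the class that is smaller at \<open>u\<close>; at \<open>v\<close> it is the only edge.\<close>
    show ?case
    proof (cases "deg R u \<le> deg (F - R) u")
      case True
      have rest: "insert {u, v} F - insert {u, v} R = F - R" using new by auto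
      show ?thesis
      proof (intro exI[of _ "insert {u, v} R"] conjI allI)
        fix x
        show "deg (insert {u, v} R) x \<le> deg (insert {u, v} F - insert {u, v} R) x + 1"
          "deg (insert {u, v} F - insert {u, v} R) x \<le> deg (insert {u, v} R) x + 1"
          unfolding rest deg_insert[OF fin(1) new(1)] using bal[of x] True v0 pendant.hyps(2)
          by (cases "x = v"; cases "x = u"; simp)+
      qed (use R in auto)
    next
      case False
      have rest: "insert {u, v} F - R = insert {u, v} (F - R)" using new by auto
      show ?thesis
      proof (intro exI[of _ R] conjI allI)
        fix x
        show "deg R x \<le> deg (insert {u, v} F - R) x + 1"
          "deg (insert {u, v} F - R) x \<le> deg R x + 1"
          unfolding rest deg_insert[OF fin(2) new(2)] using bal[of x] False v0 pendant.hyps(2)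
          by (cases "x = v"; cases "x = u"; simp)+
      qed (use R in auto)
    qed
  qed
  then show ?thesis using that by blast
qed

lemma card_Int_add_eq:
  assumes "finite A" "finite B" "X \<union> Y = A \<union> B" "X \<inter> Y = A \<inter> B"
  shows "card (X \<inter> S) + card (Y \<inter> S) = card (A \<inter> S) + card (B \<inter> S)"
proof -
  have fin: "finite X" "finite Y" using assms(1-3) by (metis finite_Un)+
  have "card (P \<inter> S) + card (Q \<inter> S) = card ((P \<union> Q) \<inter> S) + card ((P \<inter> Q) \<inter> S)"
    if "finite P" "finite Q" for P Q :: "'a set"
  proof -
    have "(P \<inter> S) \<union> (Q \<inter> S) = (P \<union> Q) \<inter> S" "(P \<inter> S) \<inter> (Q \<inter> S) = (P \<inter> Q) \<inter> S" by auto
    then show ?thesis using card_Un_Int[of "P \<inter> S" "Q \<inter> S"] that by simp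
  qed
  then show ?thesis using fin assms by metis
qed

lemma nu_attained:
  assumes "finite E"
  obtains A where "A \<subseteq> E" "k_edge_colorable k A" "card A = nu k E"
proof -
  let ?S = "{card F |F. F \<subseteq> E \<and> k_edge_colorable k F}"
  have "?S = card ` {F. F \<subseteq> E \<and> k_edge_colorable k F}" by blast
  then have "finite ?S" using assms by simp
  moreover have "0 \<in> ?S" unfolding k_edge_colorable_def by (intro CollectI exI[of _ "{}"]) auto
  ultimately have "Max ?S \<in> ?S" by (intro Max_in) auto
  then show ?thesis using that unfolding nu_def by auto
qed

lemma card_le_nu:
  assumes "finite E" "H \<subseteq> E" "k_edge_colorable k H"
  shows "card H \<le> nu k E"
proof -
  have "finite {card F |F. F \<subseteq> E \<and> k_edge_colorable k F}"
    using assms(1) by simp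
  then show ?thesis unfolding nu_def using assms by (intro Max_ge) auto
qed

lemma forest_nu_add_le:
  assumes "forest E" "a + b \<le> 2 * k"
  shows "nu a E + nu b E \<le> 2 * nu k E"
proof -
  have finE: "finite E" using assms(1) unfolding forest_def by blast
  obtain A where A: "A \<subseteq> E" "k_edge_colorable a A" "card A = nu a E"
    using nu_attained[OF finE] by blast
  obtain B where B: "B \<subseteq> E" "k_edge_colorable b B" "card B = nu b E"
    using nu_attained[OF finE] by blast
  have fin: "finite A" "finite B" using A B finE finite_subset by auto
  define D where "D = (A \<union> B) - (A \<inter> B)"
  have "D \<subseteq> E" using A(1) B(1) unfolding D_def by blast
  then obtain R where R: "R \<subseteq> D" and bal: "\<And>x. deg R x \<le> deg (D - R) x + 1"
    "\<And>x. deg (D - R) x \<le> deg R x + 1"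
    using forest_balanced_split forest_subset[OF assms(1)] by blast
  define X where "X = (A \<inter> B) \<union> R"
  define Y where "Y = (A \<inter> B) \<union> (D - R)"
  have XY: "X \<union> Y = A \<union> B" "X \<inter> Y = A \<inter> B"
    using R unfolding X_def Y_def D_def by auto
  text \<open>\<open>X\<close> and \<open>Y\<close> have the same edges as \<open>A\<close> and \<open>B\<close>, counted with multiplicity, so
    degrees and sizes add up.\<close>
  have card_XY: "card X + card Y = card A + card B"
    using card_Int_add_eq[OF fin XY, of UNIV] by simp
  have deg_XY: "deg X x + deg Y x = deg A x + deg B x" for x
    using card_Int_add_eq[OF fin XY, of "{e. x \<in> e}"] by (simp add: deg_def Int_def conj_commute)
  have "finite R" "finite (D - R)" "A \<inter> B \<inter> R = {}" "A \<inter> B \<inter> (D - R) = {}"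
    using R fin finite_subset[OF R] unfolding D_def by auto
  then have deg_X_Y: "deg X x = deg (A \<inter> B) x + deg R x" "deg Y x = deg (A \<inter> B) x + deg (D - R) x" for x
    using fin deg_Un_disjoint[of "A \<inter> B" R x] deg_Un_disjoint[of "A \<inter> B" "D - R" x]
    unfolding X_def Y_def by simp_all
  have deg_A_B: "deg A x \<le> a" "deg B x \<le> b" for x
    using A(2) B(2) by (simp_all add: deg_le_if_colorable)
  have "deg X x \<le> k" "deg Y x \<le> k" for x
    using deg_X_Y[of x] deg_A_B[of x] bal[of x] deg_XY[of x] assms(2) by linarith+
  moreover have "X \<subseteq> E" "Y \<subseteq> E" using A(1) B(1) XY(1) by auto
  ultimately have "k_edge_colorable k X" "k_edge_colorable k Y"
    using forest_colorable_if_deg_le forest_subset[OF assms(1)] by blast+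
  then have "card X \<le> nu k E" "card Y \<le> nu k E"
    using card_le_nu[OF finE] \<open>X \<subseteq> E\<close> \<open>Y \<subseteq> E\<close> by blast+
  then show ?thesis using card_XY A(3) B(3) by linarith
qed

theorem corollary1:
  fixes k :: nat and V :: "'a set" and E :: "'a set set"
  assumes "k \<ge> 2" and "is_tree V E"
  shows "real (nu k E) \<ge> (real (nu (k - 1) E) + real (nu (k + 1) E)) / 2"
proof -
  have "nu (k - 1) E + nu (k + 1) E \<le> 2 * nu k E"
    using forest_nu_add_le[of E "k - 1" "k + 1" k] is_tree_imp_forest[OF assms(2)] assms(1) by simp
  then have "real (nu (k - 1) E + nu (k + 1) E) \<le> real (2 * nu k E)"
    by (simp only: of_nat_le_iff)
  then show ?thesis by simp
qed

end
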